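(* Let $x,y\in V(D^+)$ with $y\prec x$. Then either $I_s(x)\preceq y$ or $y\prec I_s(x)$. Similarly, either $I_t(y)\preceq x$ or $x\prec I_t(y)$.
   Context: $G=(V,E,w)$ is a simple, connected, undirected graph with positive edge lengths, $s,t\in V$, and $d(\cdot,\cdot)$ is the shortest path distance in $G$; $d_s(v)=d(s,v)$, $d_t(v)=d(v,t)$. $D$ is the union of all shortest $st$-paths of $G$, and $D^+$ is the directed acyclic graph obtained from $D$ by orienting every edge toward $t$ (edge $\{u,v\}$ becomes $(u,v)$ when $d_s(v)=d_s(u)+w(u,v)$). For $x,y\in V(D^+)$, $x\prec y$ means $x$ is an ancestor of $y$ in $D^+$ (there is a directed path of positive length from $x$ to $y$; a vertex is not its own ancestor), and $x\preceq y$ means $x\prec y$ or $x=y$. For $x\neq s$, a vertex $v$ is an $s$-dominator of $x$ if $v\neq x$ and every directed path from $s$ to $x$ in $D^+$ contains $v$; the $s$-immediate-dominator $I_s(x)$ is the $s$-dominator of $x$ such that every other $s$-dominator of $x$ is an $s$-dominator of $I_s(x)$ (the $s$-dominator closest to $x$). Symmetrically, for $x\neq t$, $v\neq x$ is a $t$-dominator of $x$ if every directed path from $x$ to $t$ in $D^+$ contains $v$, and $I_t(x)$ is the $t$-dominator of $x$ closest to $x$. *)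

theory Defs
  imports Complex_Main
begin

definition walk :: "'a set \<Rightarrow> 'a set set \<Rightarrow> 'a list \<Rightarrow> bool" where
  "walk V E p \<longleftrightarrow> p \<noteq> [] \<and> set p \<subseteq> V \<and>
     (\<forall>i. Suc i < length p \<longrightarrow> {p ! i, p ! Suc i} \<in> E)"

definition walk_weight :: "('a set \<Rightarrow> real) \<Rightarrow> 'a list \<Rightarrow> real" where
  "walk_weight w p = (\<Sum>i<length p - 1. w {p ! i, p ! Suc i})"

definition wgraph :: "'a set \<Rightarrow> 'a set set \<Rightarrow> ('a set \<Rightarrow> real) \<Rightarrow> bool" where
  "wgraph V E w \<longleftrightarrow> finite V \<and> (\<forall>e\<in>E. e \<subseteq> V \<and> card e = 2) \<and> (\<forall>e\<in>E. w e > 0)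
     \<and> (\<forall>u\<in>V. \<forall>v\<in>V. \<exists>p. walk V E p \<and> hd p = u \<and> last p = v)"

definition dist :: "'a set \<Rightarrow> 'a set set \<Rightarrow> ('a set \<Rightarrow> real) \<Rightarrow> 'a \<Rightarrow> 'a \<Rightarrow> real" where
  "dist V E w u v = Inf (walk_weight w ` {p. walk V E p \<and> hd p = u \<and> last p = v})"

definition shortest_path ::
  "'a set \<Rightarrow> 'a set set \<Rightarrow> ('a set \<Rightarrow> real) \<Rightarrow> 'a \<Rightarrow> 'a \<Rightarrow> 'a list \<Rightarrow> bool" where
  "shortest_path V E w u v p \<longleftrightarrow> walk V E p \<and> hd p = u \<and> last p = v
     \<and> walk_weight w p = dist V E w u v"

definition DV :: "'a set \<Rightarrow> 'a set set \<Rightarrow> ('a set \<Rightarrow> real) \<Rightarrow> 'a \<Rightarrow> 'a \<Rightarrow> 'a set" where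
  "DV V E w s t = (\<Union>p\<in>{p. shortest_path V E w s t p}. set p)"

definition DE :: "'a set \<Rightarrow> 'a set set \<Rightarrow> ('a set \<Rightarrow> real) \<Rightarrow> 'a \<Rightarrow> 'a \<Rightarrow> 'a set set" where
  "DE V E w s t = {{p ! i, p ! Suc i} | p i. shortest_path V E w s t p \<and> Suc i < length p}"

text \<open>Arcs of D+: edges of D oriented toward t.\<close>
definition Darcs :: "'a set \<Rightarrow> 'a set set \<Rightarrow> ('a set \<Rightarrow> real) \<Rightarrow> 'a \<Rightarrow> 'a \<Rightarrow> ('a \<times> 'a) set" where
  "Darcs V E w s t = {(u, v). {u, v} \<in> DE V E w s t \<and> dist V E w s v = dist V E w s u + w {u, v}}"

text \<open>x \<prec> y: x is an ancestor of y in D+ (directed path of positive length).\<close>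
definition anc :: "'a set \<Rightarrow> 'a set set \<Rightarrow> ('a set \<Rightarrow> real) \<Rightarrow> 'a \<Rightarrow> 'a \<Rightarrow> 'a \<Rightarrow> 'a \<Rightarrow> bool" where
  "anc V E w s t x y \<longleftrightarrow> (x, y) \<in> (Darcs V E w s t)\<^sup>+"

definition dpath :: "('a \<times> 'a) set \<Rightarrow> 'a list \<Rightarrow> bool" where
  "dpath A p \<longleftrightarrow> p \<noteq> [] \<and> (\<forall>i. Suc i < length p \<longrightarrow> (p ! i, p ! Suc i) \<in> A)"

definition s_dom :: "'a set \<Rightarrow> 'a set set \<Rightarrow> ('a set \<Rightarrow> real) \<Rightarrow> 'a \<Rightarrow> 'a \<Rightarrow> 'a \<Rightarrow> 'a \<Rightarrow> bool" where
  "s_dom V E w s t v x \<longleftrightarrow> v \<noteq> x \<and>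
     (\<forall>p. dpath (Darcs V E w s t) p \<and> hd p = s \<and> last p = x \<longrightarrow> v \<in> set p)"

definition t_dom :: "'a set \<Rightarrow> 'a set set \<Rightarrow> ('a set \<Rightarrow> real) \<Rightarrow> 'a \<Rightarrow> 'a \<Rightarrow> 'a \<Rightarrow> 'a \<Rightarrow> bool" where
  "t_dom V E w s t v x \<longleftrightarrow> v \<noteq> x \<and>
     (\<forall>p. dpath (Darcs V E w s t) p \<and> hd p = x \<and> last p = t \<longrightarrow> v \<in> set p)"

definition I_s :: "'a set \<Rightarrow> 'a set set \<Rightarrow> ('a set \<Rightarrow> real) \<Rightarrow> 'a \<Rightarrow> 'a \<Rightarrow> 'a \<Rightarrow> 'a" where
  "I_s V E w s t x = (THE v. s_dom V E w s t v x \<and>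
     (\<forall>u. s_dom V E w s t u x \<and> u \<noteq> v \<longrightarrow> s_dom V E w s t u v))"

definition I_t :: "'a set \<Rightarrow> 'a set set \<Rightarrow> ('a set \<Rightarrow> real) \<Rightarrow> 'a \<Rightarrow> 'a \<Rightarrow> 'a \<Rightarrow> 'a" where
  "I_t V E w s t x = (THE v. t_dom V E w s t v x \<and>
     (\<forall>u. t_dom V E w s t u x \<and> u \<noteq> v \<longrightarrow> t_dom V E w s t u v))"

end

theory Submission
  imports Defs
begin

text \<open>
  Along every arc of \<open>D\<^sup>+\<close> the distance \<open>d\<^sub>s\<close> strictly increases, and this grading is all
  that is used. An \<open>s\<close>-dominator of \<open>x\<close> lies on every \<open>s\<close>--\<open>x\<close> path, so all of them are
  comparable under \<open>\<prec>\<close>, and the immediate dominator is the one with the largest value of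
  \<open>d\<^sub>s\<close>. If \<open>y \<prec> x\<close>, then an \<open>s\<close>--\<open>y\<close> path followed by a \<open>y\<close>--\<open>x\<close> path passes through
  \<open>I\<^sub>s(x)\<close>: on the first piece this gives \<open>I\<^sub>s(x) \<preceq> y\<close>, on the second \<open>y \<prec> I\<^sub>s(x)\<close>.
  The claim for \<open>I\<^sub>t\<close> is the same fact for the reversed DAG, graded by \<open>-d\<^sub>s\<close>.
\<close>

section \<open>Walks and shortest paths\<close>

lemma walk_Cons2: "walk V E (a # b # xs) \<longleftrightarrow> a \<in> V \<and> {a, b} \<in> E \<and> walk V E (b # xs)"
  unfolding walk_def by (auto simp: less_Suc_eq_0_disj)

lemma walk_singleton: "walk V E [a] \<longleftrightarrow> a \<in> V"
  unfolding walk_def by auto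

lemma walk_hd_in: "walk V E (a # xs) \<Longrightarrow> a \<in> V"
  unfolding walk_def by auto

lemma walk_append: "walk V E (xs @ y # ys) \<longleftrightarrow> walk V E (xs @ [y]) \<and> walk V E (y # ys)"
proof (induction xs)
  case Nil
  then show ?case by (auto simp: walk_singleton dest: walk_hd_in)
next
  case (Cons x xs)
  then show ?case by (cases xs) (auto simp: walk_Cons2 walk_singleton dest: walk_hd_in)
qed

lemma walk_weight_Cons2: "walk_weight w (a # b # xs) = w {a, b} + walk_weight w (b # xs)"
  unfolding walk_weight_def by (simp add: sum.lessThan_Suc_shift del: sum.lessThan_Suc)

lemma walk_weight_singleton: "walk_weight w [a] = 0"
  unfolding walk_weight_def by simp

lemma walk_weight_append:
  "walk_weight w (xs @ y # ys) = walk_weight w (xs @ [y]) + walk_weight w (y # ys)"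
proof (induction xs)
  case Nil
  then show ?case by (simp add: walk_weight_singleton)
next
  case (Cons x xs)
  then show ?case by (cases xs) (auto simp: walk_weight_Cons2 walk_weight_singleton)
qed

lemma walk_weight_nonneg:
  assumes "wgraph V E w" and "walk V E p"
  shows "walk_weight w p \<ge> 0"
  unfolding walk_weight_def
proof (rule sum_nonneg)
  fix i assume "i \<in> {..<length p - 1}"
  then have "{p ! i, p ! Suc i} \<in> E" using assms(2) unfolding walk_def by auto
  then show "w {p ! i, p ! Suc i} \<ge> 0" using assms(1) unfolding wgraph_def by force
qed

lemma dist_le_walk_weight:
  assumes "wgraph V E w" and "walk V E p" and "hd p = u" and "last p = v"
  shows "dist V E w u v \<le> walk_weight w p"
  unfolding dist_def
proof (rule cInf_lower)
  show "bdd_below (walk_weight w ` {p. walk V E p \<and> hd p = u \<and> last p = v})"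
    using assms(1) by (intro bdd_belowI[of _ 0]) (auto intro: walk_weight_nonneg)
qed (use assms in auto)

lemma dist_eqI:
  assumes "walk V E p" and "hd p = u" and "last p = v"
    and "\<And>q. walk V E q \<Longrightarrow> hd q = u \<Longrightarrow> last q = v \<Longrightarrow> walk_weight w p \<le> walk_weight w q"
  shows "dist V E w u v = walk_weight w p"
  unfolding dist_def using assms by (intro cInf_eq_minimum) auto

lemma shortest_path_prefix:
  assumes G: "wgraph V E w" and sp: "shortest_path V E w u v (xs @ y # ys)"
  shows "dist V E w u y = walk_weight w (xs @ [y])"
proof (rule dist_eqI)
  have p: "walk V E (xs @ y # ys)" "hd (xs @ y # ys) = u" "last (xs @ y # ys) = v"
    and opt: "walk_weight w (xs @ y # ys) = dist V E w u v"
    using sp unfolding shortest_path_def by auto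
  show "walk V E (xs @ [y])" using p(1) walk_append[of V E xs y ys] by simp
  show "hd (xs @ [y]) = u" using p(2) by (cases xs) auto
  show "last (xs @ [y]) = y" by simp
  fix q assume q: "walk V E q" "hd q = u" "last q = y"
  then have q_eq: "butlast q @ [y] = q" by (metis append_butlast_last_id walk_def)
  let ?q' = "butlast q @ y # ys"
  have "walk V E ?q'"
    using walk_append[of V E "butlast q" y ys] walk_append[of V E xs y ys] q(1) p(1) q_eq
    by simp
  moreover have "hd ?q' = u"
    using q(2) q_eq by (cases "butlast q") auto
  moreover have "last ?q' = v" using p(3) by simp
  ultimately have "dist V E w u v \<le> walk_weight w ?q'" by (rule dist_le_walk_weight[OF G])
  also have "\<dots> = walk_weight w q + walk_weight w (y # ys)"
    using q_eq walk_weight_append[of w "butlast q" y ys] by simp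
  finally show "walk_weight w (xs @ [y]) \<le> walk_weight w q"
    using opt walk_weight_append[of w xs y ys] by simp
qed

section \<open>Directed paths\<close>

lemma dpath_Cons2: "dpath A (a # b # xs) \<longleftrightarrow> (a, b) \<in> A \<and> dpath A (b # xs)"
  unfolding dpath_def by (auto simp: less_Suc_eq_0_disj)

lemma dpath_singleton: "dpath A [a]"
  unfolding dpath_def by auto

lemma dpath_not_Nil: "dpath A p \<Longrightarrow> p \<noteq> []"
  unfolding dpath_def by auto

lemma dpath_append: "dpath A (xs @ y # ys) \<longleftrightarrow> dpath A (xs @ [y]) \<and> dpath A (y # ys)"
proof (induction xs)
  case Nil
  then show ?case by (auto simp: dpath_singleton)
next
  case (Cons x xs)
  then show ?case by (cases xs) (auto simp: dpath_Cons2 dpath_singleton)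
qed

lemma dpath_rtrancl: "dpath A p \<Longrightarrow> (hd p, last p) \<in> A\<^sup>*"
proof (induction p)
  case (Cons a p)
  then show ?case by (cases p) (auto simp: dpath_Cons2 intro: converse_rtrancl_into_rtrancl)
qed (simp add: dpath_def)

lemma rtrancl_imp_dpath: "(u, v) \<in> A\<^sup>* \<Longrightarrow> \<exists>p. dpath A p \<and> hd p = u \<and> last p = v"
proof (induction rule: converse_rtrancl_induct)
  case base
  then show ?case using dpath_singleton by fastforce
next
  case (step y z)
  then obtain p where p: "dpath A p" "hd p = z" "last p = v" by auto
  then obtain q where "p = z # q" using dpath_not_Nil by (metis list.collapse)
  then have "dpath A (y # p) \<and> hd (y # p) = y \<and> last (y # p) = v"
    using p step(1) by (simp add: dpath_Cons2)
  then show ?case by blast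
qed

lemma dpath_in_set_rtrancl:
  assumes "dpath A p" and "v \<in> set p"
  shows "(hd p, v) \<in> A\<^sup>*" and "(v, last p) \<in> A\<^sup>*"
proof -
  obtain xs ys where p: "p = xs @ v # ys" using assms(2) by (metis split_list)
  then have "dpath A (xs @ [v])" and "dpath A (v # ys)"
    using assms(1) dpath_append[of A xs v ys] by auto
  moreover have "hd (xs @ [v]) = hd p" using p by (cases xs) auto
  ultimately show "(hd p, v) \<in> A\<^sup>*" and "(v, last p) \<in> A\<^sup>*"
    using dpath_rtrancl p by fastforce+
qed

lemma dpath_concat:
  assumes "dpath A p" and "dpath A q" and "last p = hd q"
  obtains c where "dpath A c" "hd c = hd p" "last c = last q" "set c = set p \<union> set q"
proof
  let ?c = "butlast p @ hd q # tl q"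
  have p_eq: "butlast p @ [hd q] = p" using assms(1,3) dpath_not_Nil by (metis append_butlast_last_id)
  have q_eq: "hd q # tl q = q" using assms(2) dpath_not_Nil by (metis list.collapse)
  show "dpath A ?c" using dpath_append[of A "butlast p" "hd q" "tl q"] assms(1,2) p_eq q_eq by simp
  show "hd ?c = hd p" using p_eq by (metis hd_append list.sel(1))
  show "last ?c = last q" using q_eq by (metis last_appendR list.distinct(1))
  show "set ?c = set p \<union> set q"
    using arg_cong[OF p_eq, of set] arg_cong[OF q_eq, of set] by auto
qed

lemma dpath_rev:
  assumes "dpath A p"
  shows "dpath (A\<inverse>) (rev p)"
  unfolding dpath_def
proof (intro conjI allI impI)
  show "rev p \<noteq> []" using assms dpath_not_Nil by simp
  fix i assume i: "Suc i < length (rev p)"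
  let ?j = "length p - Suc (Suc i)"
  have "(p ! ?j, p ! Suc ?j) \<in> A" using assms i unfolding dpath_def by simp
  moreover have "Suc ?j = length p - Suc i" using i by simp
  ultimately show "(rev p ! i, rev p ! Suc i) \<in> A\<inverse>" using i by (simp add: rev_nth)
qed

section \<open>Dominators in a graded digraph\<close>

definition dominator :: "('a \<times> 'a) set \<Rightarrow> 'a \<Rightarrow> 'a \<Rightarrow> 'a \<Rightarrow> bool" where
  "dominator A r v x \<longleftrightarrow> v \<noteq> x \<and> (\<forall>p. dpath A p \<and> hd p = r \<and> last p = x \<longrightarrow> v \<in> set p)"

definition immediate_dominator :: "('a \<times> 'a) set \<Rightarrow> 'a \<Rightarrow> 'a \<Rightarrow> 'a" where
  "immediate_dominator A r x = (THE v. dominator A r v x \<and>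
     (\<forall>u. dominator A r u x \<and> u \<noteq> v \<longrightarrow> dominator A r u v))"

lemma dominator_root: "r \<noteq> x \<Longrightarrow> dominator A r r x"
  unfolding dominator_def using hd_in_set dpath_not_Nil by blast

lemma dominator_reachable:
  assumes "(r, x) \<in> A\<^sup>*" and "dominator A r v x"
  shows "(r, v) \<in> A\<^sup>*" and "(v, x) \<in> A\<^sup>+"
proof -
  obtain p where p: "dpath A p" "hd p = r" "last p = x" using rtrancl_imp_dpath[OF assms(1)] by blast
  then have "v \<in> set p" and "v \<noteq> x" using assms(2) unfolding dominator_def by auto
  then show "(r, v) \<in> A\<^sup>*" and "(v, x) \<in> A\<^sup>+"
    using dpath_in_set_rtrancl[OF p(1)] p by (auto simp: rtrancl_eq_or_trancl)
qed

lemma dominator_comparable: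
  assumes "dominator A r v x" and "(r, a) \<in> A\<^sup>*" and "(a, x) \<in> A\<^sup>*"
  shows "(v, a) \<in> A\<^sup>* \<or> (a, v) \<in> A\<^sup>*"
proof -
  obtain p where p: "dpath A p" "hd p = r" "last p = a" using rtrancl_imp_dpath[OF assms(2)] by blast
  obtain q where q: "dpath A q" "hd q = a" "last q = x" using rtrancl_imp_dpath[OF assms(3)] by blast
  obtain c where "dpath A c" "hd c = r" "last c = x" "set c = set p \<union> set q"
    using dpath_concat[OF p(1) q(1)] p q by metis
  then have "v \<in> set p \<or> v \<in> set q" using assms(1) unfolding dominator_def by auto
  then show ?thesis
    using dpath_in_set_rtrancl(2)[OF p(1)] dpath_in_set_rtrancl(1)[OF q(1)] p(3) q(2) by auto
qed

locale graded_digraph =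
  fixes A :: "('a \<times> 'a) set" and f :: "'a \<Rightarrow> real"
  assumes arc_grade_less: "(u, v) \<in> A \<Longrightarrow> f u < f v"
begin

lemma trancl_grade_less: "(u, v) \<in> A\<^sup>+ \<Longrightarrow> f u < f v"
  by (induction rule: trancl_induct) (auto dest: arc_grade_less)

lemma rtrancl_grade_le: "(u, v) \<in> A\<^sup>* \<Longrightarrow> f u \<le> f v"
  using trancl_grade_less by (auto simp: rtrancl_eq_or_trancl less_imp_le)

lemma dominator_grade_inj:
  assumes "(r, x) \<in> A\<^sup>*" and "dominator A r u x" and "dominator A r v x" and "u \<noteq> v"
  shows "f u \<noteq> f v"
proof -
  have "(v, u) \<in> A\<^sup>* \<or> (u, v) \<in> A\<^sup>*"
    using dominator_comparable[OF assms(3) dominator_reachable(1)[OF assms(1,2)]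
        trancl_into_rtrancl[OF dominator_reachable(2)[OF assms(1,2)]]] .
  then have "(u, v) \<in> A\<^sup>+ \<or> (v, u) \<in> A\<^sup>+" using assms(4) by (auto simp: rtrancl_eq_or_trancl)
  then show ?thesis using trancl_grade_less[of u v] trancl_grade_less[of v u] by auto
qed

text \<open>A path from \<open>r\<close> to \<open>v\<close> extends through \<open>x\<close>, and the extension cannot revisit \<open>u\<close>
  because it only climbs above \<open>f v > f u\<close>.\<close>
lemma dominator_of_dominator:
  assumes rx: "(r, x) \<in> A\<^sup>*" and u: "dominator A r u x" and v: "dominator A r v x"
    and less: "f u < f v"
  shows "dominator A r u v"
  unfolding dominator_def
proof (intro conjI allI impI)
  show "u \<noteq> v" using less by auto
  fix q assume q: "dpath A q \<and> hd q = r \<and> last q = v"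
  obtain p where p: "dpath A p" "hd p = v" "last p = x"
    using rtrancl_imp_dpath[OF trancl_into_rtrancl[OF dominator_reachable(2)[OF rx v]]] by blast
  have "last q = hd p" using q p(2) by simp
  then obtain c where c: "dpath A c" "hd c = hd q" "last c = last p" "set c = set q \<union> set p"
    using q by (blast intro: dpath_concat[OF _ p(1)])
  have "u \<in> set c" using u c(1-3) q p(3) unfolding dominator_def by auto
  moreover have "u \<notin> set p"
    using dpath_in_set_rtrancl(1)[OF p(1)] rtrancl_grade_le[of v u] less p(2) by auto
  ultimately show "u \<in> set q" using c(4) by simp
qed

lemma immediate_dominator_eqI:
  assumes rx: "(r, x) \<in> A\<^sup>*" and m: "dominator A r m x"
    and max: "\<And>u. dominator A r u x \<Longrightarrow> f u \<le> f m"
  shows "immediate_dominator A r x = m"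
  unfolding immediate_dominator_def
proof (rule the_equality)
  have "dominator A r u m" if u: "dominator A r u x" and "u \<noteq> m" for u
  proof (rule dominator_of_dominator[OF rx u m])
    show "f u < f m" using max[OF u] dominator_grade_inj[OF rx u m \<open>u \<noteq> m\<close>] by simp
  qed
  then show "dominator A r m x \<and> (\<forall>u. dominator A r u x \<and> u \<noteq> m \<longrightarrow> dominator A r u m)"
    using m by blast
  fix v assume v: "dominator A r v x \<and> (\<forall>u. dominator A r u x \<and> u \<noteq> v \<longrightarrow> dominator A r u v)"
  show "v = m"
  proof (rule ccontr)
    assume "v \<noteq> m"
    then have "dominator A r m v" using v m by blast
    moreover have "(r, v) \<in> A\<^sup>*" using dominator_reachable(1)[OF rx conjunct1[OF v]] .
    ultimately have "f m < f v" by (intro trancl_grade_less dominator_reachable(2))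
    then show False using max[OF conjunct1[OF v]] by simp
  qed
qed

lemma immediate_dominator_dominates:
  assumes rx: "(r, x) \<in> A\<^sup>*" and "r \<noteq> x"
  shows "dominator A r (immediate_dominator A r x) x"
proof -
  obtain p where p: "dpath A p" "hd p = r" "last p = x" using rtrancl_imp_dpath[OF rx] by blast
  let ?D = "{v. dominator A r v x}"
  have "?D \<subseteq> set p" using p unfolding dominator_def by blast
  then have "finite ?D" by (rule finite_subset) simp
  moreover have "r \<in> ?D" using \<open>r \<noteq> x\<close> by (simp add: dominator_root)
  ultimately have "Max (f ` ?D) \<in> f ` ?D" by (intro Max_in) auto
  then obtain m where m: "m \<in> ?D" "f m = Max (f ` ?D)" by (metis imageE)
  have "immediate_dominator A r x = m"
  proof (rule immediate_dominator_eqI[OF rx])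
    show "dominator A r m x" using m(1) by simp
    fix u assume "dominator A r u x"
    then show "f u \<le> f m" using \<open>finite ?D\<close> m(2) by simp
  qed
  with m(1) show ?thesis by simp
qed

lemma immediate_dominator_comparable:
  assumes ry: "(r, y) \<in> A\<^sup>*" and yx: "(y, x) \<in> A\<^sup>+"
  shows "immediate_dominator A r x = y \<or> (immediate_dominator A r x, y) \<in> A\<^sup>+
    \<or> (y, immediate_dominator A r x) \<in> A\<^sup>+"
proof -
  have rx: "(r, x) \<in> A\<^sup>*" using rtrancl_trans[OF ry trancl_into_rtrancl[OF yx]] .
  have "r \<noteq> x" using trancl_grade_less[OF yx] rtrancl_grade_le[OF ry] by auto
  with rx have "dominator A r (immediate_dominator A r x) x" by (rule immediate_dominator_dominates)
  then have "(immediate_dominator A r x, y) \<in> A\<^sup>* \<or> (y, immediate_dominator A r x) \<in> A\<^sup>*"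
    by (rule dominator_comparable[OF _ ry trancl_into_rtrancl[OF yx]])
  then show ?thesis by (auto simp: rtrancl_eq_or_trancl)
qed

end

lemma graded_digraph_converse: "graded_digraph A f \<Longrightarrow> graded_digraph (A\<inverse>) (\<lambda>v. - f v)"
  by (simp add: graded_digraph_def)

section \<open>The shortest-path DAG\<close>

lemma shortest_path_dpath_Darcs:
  assumes G: "wgraph V E w" and sp: "shortest_path V E w s t p"
  shows "dpath (Darcs V E w s t) p"
  unfolding dpath_def
proof (intro conjI allI impI)
  show "p \<noteq> []" using sp unfolding shortest_path_def walk_def by auto
  fix i assume i: "Suc i < length p"
  define a b xs zs where "a = p ! i" and "b = p ! Suc i" and "xs = take i p"
    and "zs = drop (Suc (Suc i)) p"
  have "xs @ a # b # zs = p"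
    unfolding a_def b_def xs_def zs_def using i by (metis Cons_nth_drop_Suc Suc_lessD id_take_nth_drop)
  then have sp_a: "shortest_path V E w s t (xs @ a # b # zs)"
    and sp_b: "shortest_path V E w s t ((xs @ [a]) @ b # zs)" using sp by simp_all
  have "dist V E w s b = walk_weight w (xs @ a # [b])"
    using shortest_path_prefix[OF G sp_b] by simp
  also have "\<dots> = dist V E w s a + w {a, b}"
    using walk_weight_append[of w xs a "[b]"] shortest_path_prefix[OF G sp_a]
    by (simp add: walk_weight_Cons2 walk_weight_singleton)
  finally have "dist V E w s b = dist V E w s a + w {a, b}" .
  moreover have "{a, b} \<in> DE V E w s t" unfolding DE_def a_def b_def using sp i by blast
  ultimately show "(p ! i, p ! Suc i) \<in> Darcs V E w s t" unfolding Darcs_def a_def b_def by simp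
qed

lemma Darcs_dist_less:
  assumes G: "wgraph V E w" and uv: "(u, v) \<in> Darcs V E w s t"
  shows "dist V E w s u < dist V E w s v"
proof -
  have "{u, v} \<in> DE V E w s t" and dist_v: "dist V E w s v = dist V E w s u + w {u, v}"
    using uv unfolding Darcs_def by auto
  then obtain p i where "{u, v} = {p ! i, p ! Suc i}" "shortest_path V E w s t p" "Suc i < length p"
    unfolding DE_def by blast
  then have "{u, v} \<in> E" unfolding shortest_path_def walk_def by auto
  then have "w {u, v} > 0" using G unfolding wgraph_def by blast
  then show ?thesis using dist_v by simp
qed

lemma graded_digraph_Darcs: "wgraph V E w \<Longrightarrow> graded_digraph (Darcs V E w s t) (dist V E w s)"
  by unfold_locales (rule Darcs_dist_less)

lemma DV_reachable:
  assumes G: "wgraph V E w" and x: "x \<in> DV V E w s t"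
  shows "(s, x) \<in> (Darcs V E w s t)\<^sup>*" and "(x, t) \<in> (Darcs V E w s t)\<^sup>*"
proof -
  obtain p where p: "shortest_path V E w s t p" "x \<in> set p" using x unfolding DV_def by blast
  then have "hd p = s" and "last p = t" unfolding shortest_path_def by auto
  then show "(s, x) \<in> (Darcs V E w s t)\<^sup>*" and "(x, t) \<in> (Darcs V E w s t)\<^sup>*"
    using dpath_in_set_rtrancl[OF shortest_path_dpath_Darcs[OF G p(1)] p(2)] by simp_all
qed

lemma I_s_eq_immediate_dominator: "I_s V E w s t = immediate_dominator (Darcs V E w s t) s"
proof -
  have "s_dom V E w s t = dominator (Darcs V E w s t) s"
    by (simp add: fun_eq_iff s_dom_def dominator_def)
  then show ?thesis by (simp add: fun_eq_iff I_s_def immediate_dominator_def)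
qed

lemma dpath_rev_iff: "dpath (A\<inverse>) (rev p) \<longleftrightarrow> dpath A p"
  using dpath_rev[of A p] dpath_rev[of "A\<inverse>" "rev p"] by auto

lemma t_dom_eq_dominator_converse: "t_dom V E w s t = dominator ((Darcs V E w s t)\<inverse>) t"
proof (intro ext)
  fix v x
  let ?A = "Darcs V E w s t"
  have "(\<forall>q. dpath (?A\<inverse>) q \<and> hd q = t \<and> last q = x \<longrightarrow> v \<in> set q) \<longleftrightarrow>
    (\<forall>p. dpath (?A\<inverse>) (rev p) \<and> hd (rev p) = t \<and> last (rev p) = x \<longrightarrow> v \<in> set (rev p))"
    by (metis rev_rev_ident)
  then show "t_dom V E w s t v x = dominator (?A\<inverse>) t v x"
    unfolding t_dom_def dominator_def by (auto simp: dpath_rev_iff hd_rev last_rev)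
qed

lemma I_t_eq_immediate_dominator: "I_t V E w s t = immediate_dominator ((Darcs V E w s t)\<inverse>) t"
  by (simp add: fun_eq_iff I_t_def immediate_dominator_def t_dom_eq_dominator_converse)

theorem lemma2:
  fixes V :: "'a set" and E :: "'a set set" and w :: "'a set \<Rightarrow> real" and s t x y :: 'a
  assumes "wgraph V E w" and "s \<in> V" and "t \<in> V"
    and "x \<in> DV V E w s t" and "y \<in> DV V E w s t"
    and "anc V E w s t y x"
  shows "((I_s V E w s t x = y \<or> anc V E w s t (I_s V E w s t x) y) \<or> anc V E w s t y (I_s V E w s t x))
    \<and> ((I_t V E w s t y = x \<or> anc V E w s t (I_t V E w s t y) x) \<or> anc V E w s t x (I_t V E w s t y))"
proof -
  let ?A = "Darcs V E w s t"
  interpret forward: graded_digraph ?A "dist V E w s"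
    using graded_digraph_Darcs[OF assms(1)] .
  interpret backward: graded_digraph "?A\<inverse>" "\<lambda>v. - dist V E w s v"
    using graded_digraph_converse[OF graded_digraph_Darcs[OF assms(1)]] .
  have yx: "(y, x) \<in> ?A\<^sup>+" using assms(6) unfolding anc_def .
  have "(s, y) \<in> ?A\<^sup>*" using DV_reachable(1)[OF assms(1,5)] .
  then have "immediate_dominator ?A s x = y \<or> (immediate_dominator ?A s x, y) \<in> ?A\<^sup>+
      \<or> (y, immediate_dominator ?A s x) \<in> ?A\<^sup>+"
    using yx by (rule forward.immediate_dominator_comparable)
  moreover have "(t, x) \<in> (?A\<inverse>)\<^sup>*"
    using DV_reachable(2)[OF assms(1,4)] by (simp add: rtrancl_converse)
  then have "immediate_dominator (?A\<inverse>) t y = x \<or> (immediate_dominator (?A\<inverse>) t y, x) \<in> (?A\<inverse>)\<^sup>+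
      \<or> (x, immediate_dominator (?A\<inverse>) t y) \<in> (?A\<inverse>)\<^sup>+"
    using yx by (intro backward.immediate_dominator_comparable) (simp_all add: trancl_converse)
  ultimately show ?thesis
    unfolding anc_def I_s_eq_immediate_dominator I_t_eq_immediate_dominator
    by (auto simp: trancl_converse)
qed

end
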